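(* (i) $\mathcal{T}(D)=\mathcal{S}(D)$ for all $D\in\mathcal{C}^\uparrow$. (ii) For all $C\in\mathcal{C}$: $\mathcal{T}(C\vee\Pi)=C^\uparrow$ and $\mathcal{T}(C^\uparrow)=C\vee\Pi$.
   Context: $\mathcal{C}$ is the class of bivariate copulas, $\mathcal{C}^\uparrow$ the SI copulas ($C(v,\cdot)$ concave for all $v$). $\partial_2$ is the partial derivative in the second argument; $\Pi(u,v)=uv$; $D\vee E(u,v):=\int_0^1\min\{\partial_2D(u,t),\partial_2E(v,t)\}\,dt$; $\mathcal{T}(C):=C\vee\Pi$. For measurable $h:(0,1)\to[0,1]$, $h^*$ is the a.e.-unique decreasing function with $\lambda(h^*\le y)=\lambda(h\le y)$ for all $y$; $C^\uparrow(v,u):=\int_0^uh_v^*(t)\,dt$ with $h_v=\partial_2C(v,\cdot)$. For $C\in\mathcal{C}^\uparrow$: $\partial_2^+C(v,t):=\lim_{s\downarrow t}\partial_2C(v,s)$, $f^{-1}(w):=\inf\{t\in[0,1]:f(t)\le w\}$ for decreasing right-continuous $f$, and $\mathcal{S}(C)(v,u):=\int_0^u(\partial_2^+C(v,\cdot))^{-1}(t)\,dt$. *)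

theory Defs
  imports "HOL-Analysis.Analysis"
begin

definition is_copula :: "(real \<Rightarrow> real \<Rightarrow> real) \<Rightarrow> bool" where
  "is_copula C \<longleftrightarrow>
     (\<forall>u\<in>{0..1}. C u 0 = 0 \<and> C 0 u = 0 \<and> C u 1 = u \<and> C 1 u = u) \<and>
     (\<forall>u1 u2 v1 v2. 0 \<le> u1 \<and> u1 \<le> u2 \<and> u2 \<le> 1 \<and> 0 \<le> v1 \<and> v1 \<le> v2 \<and> v2 \<le> 1 \<longrightarrow>
        C u2 v2 - C u2 v1 - C u1 v2 + C u1 v1 \<ge> 0)"

definition is_SI_copula :: "(real \<Rightarrow> real \<Rightarrow> real) \<Rightarrow> bool" where
  "is_SI_copula C \<longleftrightarrow> is_copula C \<and> (\<forall>v\<in>{0..1}. concave_on {0..1} (\<lambda>t. C v t))"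

definition partial2 :: "(real \<Rightarrow> real \<Rightarrow> real) \<Rightarrow> real \<Rightarrow> real \<Rightarrow> real" where
  "partial2 C u t = (if (\<lambda>s. C u s) differentiable (at t) then deriv (\<lambda>s. C u s) t else 0)"

definition Pi_cop :: "real \<Rightarrow> real \<Rightarrow> real" where
  "Pi_cop u v = u * v"

definition cop_join :: "(real \<Rightarrow> real \<Rightarrow> real) \<Rightarrow> (real \<Rightarrow> real \<Rightarrow> real) \<Rightarrow> real \<Rightarrow> real \<Rightarrow> real" where
  "cop_join D E u v = integral {0..1} (\<lambda>t. min (partial2 D u t) (partial2 E v t))"

definition cop_T :: "(real \<Rightarrow> real \<Rightarrow> real) \<Rightarrow> real \<Rightarrow> real \<Rightarrow> real" where
  "cop_T C = cop_join C Pi_cop"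

text \<open>Decreasing rearrangement on (0,1) (the a.e.-unique one, chosen via SOME).\<close>
definition decr_rearr :: "(real \<Rightarrow> real) \<Rightarrow> real \<Rightarrow> real" where
  "decr_rearr h = (SOME g. antimono_on {0<..<1} g \<and>
      (\<forall>y. emeasure lborel {t\<in>{0<..<1}. g t \<le> y} = emeasure lborel {t\<in>{0<..<1}. h t \<le> y}))"

definition C_up :: "(real \<Rightarrow> real \<Rightarrow> real) \<Rightarrow> real \<Rightarrow> real \<Rightarrow> real" where
  "C_up C v u = integral {0..u} (decr_rearr (\<lambda>t. partial2 C v t))"

definition partial2_plus :: "(real \<Rightarrow> real \<Rightarrow> real) \<Rightarrow> real \<Rightarrow> real \<Rightarrow> real" where
  "partial2_plus C v t =
     Lim (at t within {s. t < s \<and> (\<lambda>x. C v x) differentiable (at s)}) (\<lambda>s. partial2 C v s)"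

definition gen_inv :: "(real \<Rightarrow> real) \<Rightarrow> real \<Rightarrow> real" where
  "gen_inv f w = (if {t\<in>{0..1}. f t \<le> w} = {} then 1 else Inf {t\<in>{0..1}. f t \<le> w})"

definition cop_S :: "(real \<Rightarrow> real \<Rightarrow> real) \<Rightarrow> real \<Rightarrow> real \<Rightarrow> real" where
  "cop_S C v u = integral {0..u} (gen_inv (\<lambda>t. partial2_plus C v t))"

end

theory Submission
  imports Defs
begin

(* Write m_h(w) = |{t in (0,1). h t > w}| for a measurable h : (0,1) -> [0,1], where |.| is
   Lebesgue measure.  By the layer cake formula  int_0^1 min(h t, v) dt = int_0^v m_h,  so
   T(C)(u,v) = (C v Pi)(u,v) = int_0^v m_h  for  h = d2 C(u,.).

   (i) If C(u,.) is concave, d2 C(u,.) agrees with the decreasing right derivative off the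
   countably many points where C(u,.) is not differentiable, hence {h > w} is an initial
   segment of (0,1) up to a null set, of length the generalised inverse of d2+ C(u,.) at w.

   (ii) If K(u,.) is a primitive of a decreasing g, then d2 K(u,.) = g off the countably many
   jumps of g, so T(K)(u,v) = int_0^v m_g.  Now (C v Pi)(u,.) is a primitive of the decreasing
   function m_h, and m_{m_g} = g off the jumps of a decreasing g; and C^up(u,.) is a primitive
   of the rearrangement h^*, which is equimeasurable with h, so m_{h^*} = m_h. *)

section \<open>Superlevel measures on the unit interval\<close>

lemma fmeasurable_unit_interval: "{0<..<1::real} \<in> fmeasurable lborel"
  by (simp add: fmeasurable_def)

lemma fmeasurable_subset_unit_interval:
  "X \<subseteq> {0<..<1::real} \<Longrightarrow> X \<in> sets lborel \<Longrightarrow> X \<in> fmeasurable lborel"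
  using fmeasurableI2[OF fmeasurable_unit_interval] .

lemma countable_imp_negligible: "countable (S :: real set) \<Longrightarrow> negligible S"
  by (simp add: negligible_iff_null_sets null_sets_completionI countable_imp_null_set_lborel)

lemma measure_eq_if_ae_eq_initial_interval:
  fixes X Z :: "real set"
  assumes X: "X \<subseteq> {0<..<1}" and Z: "countable Z" and a: "0 \<le> a" "a \<le> 1"
    and ae_eq: "\<And>t. t \<in> {0<..<1} \<Longrightarrow> t \<notin> Z \<Longrightarrow> t \<noteq> a \<Longrightarrow> t \<in> X \<longleftrightarrow> t < a"
  shows "measure lborel X = a"
proof -
  define Z' where "Z' = insert a Z"
  have null: "Z' \<in> null_sets lborel" "X \<inter> Z' \<in> null_sets lborel"
    using Z by (auto simp: Z'_def intro: countable_imp_null_set_lborel countable_subset[of "X \<inter> Z'" Z'])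
  have X_eq: "X = ({0<..<a} - Z') \<union> (X \<inter> Z')"
  proof (intro equalityI subsetI)
    fix t assume "t \<in> X"
    then show "t \<in> ({0<..<a} - Z') \<union> (X \<inter> Z')" using ae_eq[of t] X by (auto simp: Z'_def)
  next
    fix t assume "t \<in> ({0<..<a} - Z') \<union> (X \<inter> Z')"
    then show "t \<in> X" using ae_eq[of t] a by (auto simp: Z'_def)
  qed
  with null have X_meas: "X \<in> sets lborel"
    by (metis null_setsD2 sets.Diff sets.Un sets_lborel borel_open open_greaterThanLessThan)
  have "measure lborel X = measure lborel (X - Z')"
    using measure_Diff_null_set[OF X_meas null(1)] by simp
  also have "X - Z' = {0<..<a} - Z'" using X_eq by blast
  also have "measure lborel \<dots> = a"
    using measure_Diff_null_set[OF _ null(1), of "{0<..<a}"] a by simp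
  finally show ?thesis .
qed

lemma integral_eq_integral_indicator_Ioo:
  fixes g :: "real \<Rightarrow> real"
  shows "integral {a..b} g = integral UNIV (\<lambda>t. indicator {a<..<b} t * g t)"
proof -
  have "integral {a..b} g = integral {a<..<b} g"
    by (rule integral_spike_set) (auto intro: negligible_subset[OF negligible_finite[of "{a, b}"]])
  also have "\<dots> = integral UNIV (\<lambda>t. if t \<in> {a<..<b} then g t else 0)"
    by (rule integral_restrict_UNIV[symmetric])
  also have "(\<lambda>t. if t \<in> {a<..<b} then g t else 0) = (\<lambda>t. indicator {a<..<b} t * g t)"
    by (auto simp: fun_eq_iff indicator_def)
  finally show ?thesis .
qed

lemma integral_eq_if_nn_integral_eq:
  fixes f g :: "'a::euclidean_space \<Rightarrow> real"
  assumes "f \<in> borel_measurable borel" "g \<in> borel_measurable borel"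
    and "\<And>x. 0 \<le> f x" "\<And>x. 0 \<le> g x"
    and eq: "(\<integral>\<^sup>+x. f x \<partial>lborel) = (\<integral>\<^sup>+x. g x \<partial>lborel)" and fin: "(\<integral>\<^sup>+x. f x \<partial>lborel) < \<infinity>"
  shows "integral UNIV f = integral UNIV g"
proof -
  obtain r where r: "(\<integral>\<^sup>+x. f x \<partial>lborel) = ennreal r" "0 \<le> r"
    using fin ennreal_cases[of "\<integral>\<^sup>+x. f x \<partial>lborel"] by force
  have "(f has_integral r) UNIV" "(g has_integral r) UNIV"
    using r eq by (auto intro: nn_integral_has_integral assms)
  then show ?thesis by (simp add: integral_unique)
qed

definition superlevel_measure :: "(real \<Rightarrow> real) \<Rightarrow> real \<Rightarrow> real" where
  "superlevel_measure h w = measure lborel {t\<in>{0<..<1}. w < h t}"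

locale unit_interval_function =
  fixes h :: "real \<Rightarrow> real"
  assumes restricted_borel_measurable: "(\<lambda>t. if t \<in> {0<..<1} then h t else 0) \<in> borel_measurable borel"
    and value_bounds: "t \<in> {0<..<1} \<Longrightarrow> 0 \<le> h t \<and> h t \<le> 1"
begin

lemma superlevel_set_measurable[measurable]: "{t\<in>{0<..<1}. w < h t} \<in> sets lborel"
proof -
  have "{t\<in>{0<..<1}. w < h t} = {t\<in>{0<..<1}. w < (if t \<in> {0<..<1} then h t else 0)}"
    by auto
  also have "\<dots> \<in> sets lborel" using restricted_borel_measurable by measurable
  finally show ?thesis .
qed

lemma sublevel_set_measurable[measurable]: "{t\<in>{0<..<1}. h t \<le> w} \<in> sets lborel"
proof -
  have "{t\<in>{0<..<1}. h t \<le> w} = {0<..<1} - {t\<in>{0<..<1}. w < h t}" by auto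
  also have "\<dots> \<in> sets lborel" by measurable
  finally show ?thesis .
qed

lemma superlevel_measure_antimono: "antimono (superlevel_measure h)"
proof (rule antimonoI)
  fix x y :: real assume "x \<le> y"
  then show "superlevel_measure h y \<le> superlevel_measure h x"
    unfolding superlevel_measure_def
    by (intro measure_mono_fmeasurable[OF _ superlevel_set_measurable]
        fmeasurable_subset_unit_interval superlevel_set_measurable) auto
qed

lemma superlevel_measure_borel_measurable[measurable]:
  "superlevel_measure h \<in> borel_measurable borel"
proof -
  have "mono (\<lambda>w. - superlevel_measure h w)"
    using superlevel_measure_antimono by (simp add: antimono_def monotone_def)
  then have "(\<lambda>w. - (- superlevel_measure h w)) \<in> borel_measurable borel"
    by (intro borel_measurable_uminus borel_measurable_mono)
  then show ?thesis by simp
qed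

lemma superlevel_measure_bounds: "0 \<le> superlevel_measure h w \<and> superlevel_measure h w \<le> 1"
proof -
  have "measure lborel {t\<in>{0<..<1}. w < h t} \<le> measure lborel {0<..<1::real}"
    by (rule measure_mono_fmeasurable[OF _ superlevel_set_measurable fmeasurable_unit_interval]) auto
  then show ?thesis by (simp add: superlevel_measure_def)
qed

lemma superlevel_measure_eq_1_minus:
  "superlevel_measure h w = 1 - measure lborel {t\<in>{0<..<1}. h t \<le> w}"
proof -
  have "{t\<in>{0<..<1}. w < h t} = {0<..<1} - {t\<in>{0<..<1}. h t \<le> w}" by auto
  then show ?thesis
    using measurable_measure_Diff[OF fmeasurable_unit_interval sublevel_set_measurable[of w]]
    by (simp add: superlevel_measure_def subset_iff)
qed

lemma superlevel_measure_neg: "w < 0 \<Longrightarrow> superlevel_measure h w = 1"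
proof -
  assume "w < 0"
  then have "{t\<in>{0<..<1}. w < h t} = {0<..<1}" using value_bounds by force
  then show ?thesis by (simp add: superlevel_measure_def)
qed

lemma superlevel_measure_ge_1: "1 \<le> w \<Longrightarrow> superlevel_measure h w = 0"
proof -
  assume "1 \<le> w"
  then have "{t\<in>{0<..<1}. w < h t} = {}" using value_bounds by force
  then show ?thesis unfolding superlevel_measure_def by (simp only: measure_empty)
qed

lemma superlevel_measure_right_continuous:
  "(\<lambda>n. superlevel_measure h (w + 1 / Suc n)) \<longlonglongrightarrow> superlevel_measure h w"
proof -
  define A where "A n = {t\<in>{0<..<1}. w + 1 / Suc n < h t}" for n :: nat
  have union: "(\<Union>n. A n) = {t\<in>{0<..<1}. w < h t}"
  proof (intro equalityI subsetI)
    fix t assume "t \<in> {t\<in>{0<..<1}. w < h t}"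
    moreover obtain n :: nat where "inverse (Suc n) < h t - w"
      using reals_Archimedean calculation by (metis diff_gt_0_iff_gt mem_Collect_eq)
    ultimately have "t \<in> A n" by (simp add: A_def divide_inverse add.commute)
    then show "t \<in> (\<Union>n. A n)" by blast
  next
    fix t assume "t \<in> (\<Union>n. A n)"
    then obtain n where t: "t \<in> {0<..<1}" and "w + 1 / Suc n < h t" by (auto simp: A_def)
    moreover have "0 < 1 / Suc n" by simp
    ultimately have "w < h t" by linarith
    with t show "t \<in> {t\<in>{0<..<1}. w < h t}" by simp
  qed
  have "range A \<subseteq> sets lborel"
    unfolding A_def by (intro image_subsetI superlevel_set_measurable)
  moreover have "incseq A"
  proof (rule incseq_SucI)
    fix n
    have "1 / Suc (Suc n) \<le> 1 / Suc n" by (simp add: frac_le)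
    then show "A n \<subseteq> A (Suc n)" by (auto simp: A_def)
  qed
  moreover have "emeasure lborel (\<Union>n. A n) \<noteq> \<infinity>"
  proof -
    have "{t\<in>{0<..<1}. w < h t} \<in> fmeasurable lborel"
      by (rule fmeasurable_subset_unit_interval[OF _ superlevel_set_measurable]) auto
    then show ?thesis unfolding union by (auto simp: fmeasurable_def)
  qed
  ultimately have "(\<lambda>n. measure lborel (A n)) \<longlonglongrightarrow> measure lborel (\<Union>n. A n)"
    by (rule Lim_measure_incseq)
  then show ?thesis unfolding union by (simp add: A_def superlevel_measure_def)
qed

text \<open>Layer cake: \<open>min (h t) v\<close> is the length of \<open>{w \<in> (0,v). w < h t}\<close>; Tonelli swaps the order.\<close>
lemma nn_integral_min_eq_nn_integral_superlevel_measure: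
  assumes v: "0 \<le> v"
  shows "(\<integral>\<^sup>+t. ennreal (indicator {0<..<1} t * min (h t) v) \<partial>lborel)
       = (\<integral>\<^sup>+w. ennreal (indicator {0<..<v} w * superlevel_measure h w) \<partial>lborel)"
proof -
  define H where "H t = (if t \<in> {0<..<1} then h t else 0)" for t
  have [measurable]: "H \<in> borel_measurable borel" unfolding H_def by (rule restricted_borel_measurable)
  define F where "F = (\<lambda>(t::real, w::real).
    (indicator {0<..<1} t * indicator {0<..<v} w * indicator {w'. w' < H t} w :: ennreal))"
  have "F \<in> borel_measurable (lborel \<Otimes>\<^sub>M lborel)"
  proof -
    have "Measurable.pred (lborel \<Otimes>\<^sub>M lborel) (\<lambda>x::real \<times> real. snd x < H (fst x))"
      by measurable
    then show ?thesis unfolding F_def by (auto simp: indicator_def split_beta')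
  qed
  then have Tonelli: "(\<integral>\<^sup>+w. (\<integral>\<^sup>+t. F (t, w) \<partial>lborel) \<partial>lborel) = (\<integral>\<^sup>+t. (\<integral>\<^sup>+w. F (t, w) \<partial>lborel) \<partial>lborel)"
    by (rule lborel_pair.Fubini)
  have "(\<integral>\<^sup>+w. F (t, w) \<partial>lborel) = ennreal (indicator {0<..<1} t * min (h t) v)" for t
  proof -
    have "(\<integral>\<^sup>+w. F (t, w) \<partial>lborel)
        = (\<integral>\<^sup>+w. indicator {0<..<1} t * indicator {0<..<min v (H t)} w \<partial>lborel)"
      by (intro nn_integral_cong) (auto simp: F_def indicator_def)
    also have "\<dots> = indicator {0<..<1} t * ennreal (min v (H t))"
      using value_bounds[of t] v by (subst nn_integral_cmult) (auto simp: H_def)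
    finally show ?thesis by (simp add: H_def indicator_def min.commute)
  qed
  moreover have "(\<integral>\<^sup>+t. F (t, w) \<partial>lborel) = ennreal (indicator {0<..<v} w * superlevel_measure h w)" for w
  proof -
    have "(\<integral>\<^sup>+t. F (t, w) \<partial>lborel)
        = (\<integral>\<^sup>+t. indicator {0<..<v} w * indicator {t\<in>{0<..<1}. w < h t} t \<partial>lborel)"
      by (intro nn_integral_cong) (auto simp: F_def H_def indicator_def)
    also have "\<dots> = indicator {0<..<v} w * emeasure lborel {t\<in>{0<..<1}. w < h t}"
      using superlevel_set_measurable[of w] by (subst nn_integral_cmult) auto
    also have "emeasure lborel {t\<in>{0<..<1}. w < h t} = ennreal (superlevel_measure h w)"
      unfolding superlevel_measure_def
      by (intro emeasure_eq_measure2 fmeasurable_subset_unit_interval superlevel_set_measurable) auto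
    finally show ?thesis by (simp add: indicator_def)
  qed
  ultimately show ?thesis using Tonelli by simp
qed

lemma integral_min_eq_integral_superlevel_measure:
  assumes v: "0 \<le> v" "v \<le> 1"
  shows "integral {0..1} (\<lambda>t. min (h t) v) = integral {0..v} (superlevel_measure h)"
proof -
  have "(\<lambda>t. indicator {0<..<1} t * min (h t) v)
      = (\<lambda>t. indicator {0<..<1} t * min (if t \<in> {0<..<1} then h t else 0) v)"
    by (auto simp: fun_eq_iff indicator_def)
  also have "\<dots> \<in> borel_measurable borel"
    using restricted_borel_measurable by measurable
  finally have meas: "(\<lambda>t. indicator {0<..<1} t * min (h t) v) \<in> borel_measurable borel" .
  have "(\<integral>\<^sup>+t. ennreal (indicator {0<..<1} t * min (h t) v) \<partial>lborel) \<le> (\<integral>\<^sup>+t. indicator {0<..<1::real} t \<partial>lborel)"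
    using value_bounds v by (intro nn_integral_mono) (auto simp: indicator_def)
  then have "(\<integral>\<^sup>+t. ennreal (indicator {0<..<1} t * min (h t) v) \<partial>lborel) < \<infinity>"
    by (simp add: le_less_trans)
  then have "integral UNIV (\<lambda>t. indicator {0<..<1} t * min (h t) v)
      = integral UNIV (\<lambda>w. indicator {0<..<v} w * superlevel_measure h w)"
    using v superlevel_measure_bounds value_bounds
    by (intro integral_eq_if_nn_integral_eq[OF meas] nn_integral_min_eq_nn_integral_superlevel_measure)
      (auto simp: indicator_def)
  then show ?thesis by (simp add: integral_eq_integral_indicator_Ioo)
qed

end

section \<open>Decreasing functions and rearrangements\<close>

lemma borel_measurable_antimono_on_unit_interval:
  fixes g :: "real \<Rightarrow> real"
  assumes "antimono_on {0<..<1} g"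
  shows "(\<lambda>t. if t \<in> {0<..<1} then g t else 0) \<in> borel_measurable borel"
proof -
  have "mono_on {0<..<1} (\<lambda>t. - g t)"
    using assms by (auto simp: monotone_on_def)
  then have "(\<lambda>t. - g t) \<in> borel_measurable (restrict_space borel {0<..<1})"
    by (rule borel_measurable_mono_on_fnc)
  then have "(\<lambda>t. indicator {0<..<1} t *\<^sub>R (- g t)) \<in> borel_measurable borel"
    by (subst (asm) borel_measurable_restrict_space_iff) auto
  then have "(\<lambda>t. - (indicator {0<..<1} t *\<^sub>R (- g t))) \<in> borel_measurable borel"
    by measurable
  moreover have "(\<lambda>t. - (indicator {0<..<1} t *\<^sub>R (- g t))) = (\<lambda>t. if t \<in> {0<..<1} then g t else 0)"
    by (auto simp: indicator_def fun_eq_iff)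
  ultimately show ?thesis by simp
qed

locale decreasing_unit_function = unit_interval_function +
  assumes antimono: "antimono_on {0<..<1} h"
begin

lemma antimonoD: "r \<in> {0<..<1} \<Longrightarrow> s \<in> {0<..<1} \<Longrightarrow> r \<le> s \<Longrightarrow> h s \<le> h r"
  using antimono by (auto simp: monotone_on_def)

lemma integrable_on_unit_interval: "h integrable_on {0..1}"
proof -
  define h' where "h' t = (if t \<le> 0 then 1 else if 1 \<le> t then 0 else h t)" for t
  have "mono_on {0..1} (\<lambda>t. - h' t)"
    using value_bounds antimonoD by (intro mono_onI) (force simp: h'_def)
  then have "(\<lambda>t. - (- h' t)) integrable_on {0..1}"
    by (intro integrable_neg integrable_on_mono_on)
  then show ?thesis
    by (rule integrable_spike_finite[where S = "{0, 1}", rotated 2]) (auto simp: h'_def)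
qed

lemma countable_discontinuities: "countable {t\<in>{0<..<1}. \<not> isCont h t}"
proof -
  have "mono_on {0<..<1} (\<lambda>t. - h t)"
    using antimonoD by (intro mono_onI) force
  then have "countable {t\<in>{0<..<1}. \<not> isCont (\<lambda>t. - h t) t}"
    by (intro mono_on_ctble_discont_open) auto
  moreover have "isCont (\<lambda>t. - h t) t \<longleftrightarrow> isCont h t" for t
    using continuous_minus[of "at t" "\<lambda>t. - h t"] continuous_minus[of "at t" h] by auto
  ultimately show ?thesis by simp
qed

lemma less_superlevel_measure:
  assumes w: "w \<in> {0<..<1}" and cont: "isCont h w" and "t < h w"
  shows "w < superlevel_measure h t"
proof -
  have "eventually (\<lambda>x. t < h x) (at w)"
    using cont \<open>t < h w\<close> by (auto simp: isCont_def intro: order_tendstoD(1))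
  then obtain d where d: "d > 0" "\<And>x. x \<noteq> w \<Longrightarrow> dist x w < d \<Longrightarrow> t < h x"
    by (auto simp: eventually_at)
  define \<mu> where "\<mu> = min d (1 - w)"
  define w' where "w' = w + \<mu> / 2"
  have "0 < \<mu>" "\<mu> \<le> 1 - w" "\<mu> \<le> d" using d w by (auto simp: \<mu>_def)
  then have w': "w < w'" "w' < 1" "dist w' w < d"
    by (auto simp: w'_def dist_real_def)
  have "{0<..w'} \<subseteq> {s\<in>{0<..<1}. t < h s}"
  proof
    fix s assume s: "s \<in> {0<..w'}"
    then have "h w' \<le> h s" using antimonoD[of s w'] w' w by auto
    moreover have "t < h w'" using d(2)[of w'] w' by auto
    ultimately show "s \<in> {s\<in>{0<..<1}. t < h s}" using s w' by auto
  qed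
  then have "measure lborel {0<..w'} \<le> measure lborel {s\<in>{0<..<1}. t < h s}"
    by (rule measure_mono_fmeasurable[OF _ _ fmeasurable_subset_unit_interval[OF _ superlevel_set_measurable]])
      auto
  then show ?thesis using w' w by (simp add: superlevel_measure_def)
qed

lemma superlevel_measure_le:
  assumes w: "w \<in> {0<..<1}" and "h w < t"
  shows "superlevel_measure h t \<le> w"
proof -
  have "{s\<in>{0<..<1}. t < h s} \<subseteq> {0<..<w}"
  proof
    fix s assume s: "s \<in> {s\<in>{0<..<1}. t < h s}"
    show "s \<in> {0<..<w}"
    proof (rule ccontr)
      assume "s \<notin> {0<..<w}"
      then have "h s \<le> h w" using antimonoD[of w s] s w by auto
      then show False using s \<open>h w < t\<close> by auto
    qed
  qed
  then have "measure lborel {s\<in>{0<..<1}. t < h s} \<le> measure lborel {0<..<w}"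
    by (rule measure_mono_fmeasurable[OF _ superlevel_set_measurable fmeasurable_subset_unit_interval])
      (use w in auto)
  then show ?thesis using w by (simp add: superlevel_measure_def)
qed

text \<open>For decreasing \<open>h\<close>, \<open>{h > t}\<close> is an initial segment of \<open>(0,1)\<close>, so \<open>w < \<lambda>{h > t}\<close>
  holds iff \<open>t < h w\<close>, except at jumps of \<open>h\<close>.\<close>
lemma superlevel_measure_superlevel_measure:
  assumes w: "w \<in> {0<..<1}" and cont: "isCont h w"
  shows "superlevel_measure (superlevel_measure h) w = h w"
  unfolding superlevel_measure_def[of "superlevel_measure h"]
proof (rule measure_eq_if_ae_eq_initial_interval[OF _ countable_empty])
  fix t assume "t \<in> {0<..<1}" "t \<noteq> h w"
  then show "t \<in> {t\<in>{0<..<1}. w < superlevel_measure h t} \<longleftrightarrow> t < h w"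
    using less_superlevel_measure[OF w cont, of t] superlevel_measure_le[OF w, of t]
    by (cases t "h w" rule: linorder_cases) auto
qed (use value_bounds[OF w] in auto)

lemma integral_superlevel_measure_superlevel_measure:
  assumes v: "v \<in> {0..1}"
  shows "integral {0..v} (superlevel_measure (superlevel_measure h)) = integral {0..v} h"
proof (rule integral_spike)
  show "negligible ({0, 1} \<union> {t\<in>{0<..<1}. \<not> isCont h t})"
    using countable_discontinuities by (intro countable_imp_negligible) auto
qed (use v superlevel_measure_superlevel_measure in auto)

end

text \<open>The right-continuous representative of the decreasing rearrangement: the generalised inverse
  of \<open>w \<mapsto> \<lambda>{h > w}\<close>.\<close>
definition decr_quantile :: "(real \<Rightarrow> real) \<Rightarrow> real \<Rightarrow> real" where
  "decr_quantile h t = Inf {y. superlevel_measure h y \<le> t}"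

context unit_interval_function
begin

lemma decreasing_unit_function_superlevel_measure:
  "decreasing_unit_function (superlevel_measure h)"
proof
  show "(\<lambda>t. if t \<in> {0<..<1} then superlevel_measure h t else 0) \<in> borel_measurable borel"
    by measurable
  show "antimono_on {0<..<1} (superlevel_measure h)"
    using superlevel_measure_antimono by (auto simp: monotone_on_def antimono_def)
qed (use superlevel_measure_bounds in auto)

lemma decr_quantile_le_iff:
  assumes t: "t \<in> {0<..<1}"
  shows "decr_quantile h t \<le> y \<longleftrightarrow> superlevel_measure h y \<le> t"
proof -
  define B where "B = {y. superlevel_measure h y \<le> t}"
  have "1 \<in> B" using superlevel_measure_ge_1[of 1] t by (auto simp: B_def)
  have "bdd_below B"
  proof (rule bdd_belowI[of _ 0])
    fix x assume "x \<in> B"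
    then show "0 \<le> x" using superlevel_measure_neg[of x] t by (auto simp: B_def not_le[symmetric])
  qed
  show ?thesis
  proof
    assume "superlevel_measure h y \<le> t"
    then have "y \<in> B" by (simp add: B_def)
    then show "decr_quantile h t \<le> y"
      unfolding decr_quantile_def B_def[symmetric] using \<open>bdd_below B\<close> by (rule cInf_lower)
  next
    assume le: "decr_quantile h t \<le> y"
    have "superlevel_measure h (y + 1 / Suc n) \<le> t" for n
    proof -
      have "Inf B < y + 1 / Suc n" using le unfolding decr_quantile_def B_def[symmetric]
        by (simp add: add_pos_pos order.strict_trans1 less_add_same_cancel1)
      then obtain b where b: "b \<in> B" "b < y + 1 / Suc n"
        using cInf_lessD[of B] \<open>1 \<in> B\<close> by blast
      have "superlevel_measure h (y + 1 / Suc n) \<le> superlevel_measure h b"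
        using superlevel_measure_antimono b(2) by (auto simp: antimono_def)
      also have "\<dots> \<le> t" using b(1) by (simp add: B_def)
      finally show ?thesis .
    qed
    then show "superlevel_measure h y \<le> t"
      by (intro tendsto_upperbound[OF superlevel_measure_right_continuous] always_eventually) simp_all
  qed
qed

lemma decr_quantile_antimono_on: "antimono_on {0<..<1} (decr_quantile h)"
proof (rule monotone_onI)
  fix r s :: real assume r: "r \<in> {0<..<1}" and s: "s \<in> {0<..<1}" and "r \<le> s"
  have "superlevel_measure h (decr_quantile h r) \<le> r"
    using decr_quantile_le_iff[OF r, of "decr_quantile h r"] by simp
  then show "decr_quantile h s \<le> decr_quantile h r"
    using decr_quantile_le_iff[OF s] \<open>r \<le> s\<close> by simp
qed

lemma emeasure_sublevel_decr_quantile: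
  "emeasure lborel {t\<in>{0<..<1}. decr_quantile h t \<le> y} = emeasure lborel {t\<in>{0<..<1}. h t \<le> y}"
proof -
  have "{t\<in>{0<..<1}. decr_quantile h t \<le> y} = {t\<in>{0<..<1}. superlevel_measure h y \<le> t}"
    using decr_quantile_le_iff by blast
  also have "emeasure lborel \<dots> = ennreal (1 - superlevel_measure h y)"
  proof (cases "superlevel_measure h y = 0")
    case True
    then have "{t\<in>{0<..<1::real}. superlevel_measure h y \<le> t} = {0<..<1}" by auto
    then show ?thesis using True by simp
  next
    case False
    then have "{t\<in>{0<..<1::real}. superlevel_measure h y \<le> t} = {superlevel_measure h y..<1}"
      using superlevel_measure_bounds[of y] by auto
    then show ?thesis using superlevel_measure_bounds[of y] by simp
  qed
  also have "\<dots> = emeasure lborel {t\<in>{0<..<1}. h t \<le> y}"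
  proof -
    have "{t\<in>{0<..<1}. h t \<le> y} \<in> fmeasurable lborel"
      by (rule fmeasurable_subset_unit_interval[OF _ sublevel_set_measurable]) auto
    then show ?thesis by (simp add: emeasure_eq_measure2 superlevel_measure_eq_1_minus)
  qed
  finally show ?thesis .
qed

lemma decr_rearr_spec:
  "antimono_on {0<..<1} (decr_rearr h)"
  "\<And>y. emeasure lborel {t\<in>{0<..<1}. decr_rearr h t \<le> y} = emeasure lborel {t\<in>{0<..<1}. h t \<le> y}"
proof -
  have "antimono_on {0<..<1} (decr_rearr h) \<and>
    (\<forall>y. emeasure lborel {t\<in>{0<..<1}. decr_rearr h t \<le> y} = emeasure lborel {t\<in>{0<..<1}. h t \<le> y})"
    unfolding decr_rearr_def
    by (rule someI[where x = "decr_quantile h"])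
      (intro conjI allI decr_quantile_antimono_on emeasure_sublevel_decr_quantile)
  then show "antimono_on {0<..<1} (decr_rearr h)"
    "\<And>y. emeasure lborel {t\<in>{0<..<1}. decr_rearr h t \<le> y} = emeasure lborel {t\<in>{0<..<1}. h t \<le> y}"
    by blast+
qed

context
  fixes g :: "real \<Rightarrow> real"
  assumes g_antimono: "antimono_on {0<..<1} g"
    and equimeasurable: "\<And>y. emeasure lborel {t\<in>{0<..<1}. g t \<le> y} = emeasure lborel {t\<in>{0<..<1}. h t \<le> y}"
begin

lemma equimeasurable_value_bounds:
  assumes t: "t \<in> {0<..<1}"
  shows "0 \<le> g t \<and> g t \<le> 1"
proof
  have [measurable]: "(\<lambda>t. if t \<in> {0<..<1} then g t else 0) \<in> borel_measurable borel"
    by (rule borel_measurable_antimono_on_unit_interval[OF g_antimono])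
  have "{s\<in>{0<..<1}. g s \<le> g t} = {s\<in>{0<..<1}. (if s \<in> {0<..<1} then g s else 0) \<le> g t}" by auto
  also have "\<dots> \<in> sets lborel" by measurable
  finally have "{s\<in>{0<..<1}. g s \<le> g t} \<in> sets lborel" .
  have antimonoD: "g s \<le> g r" if "r \<in> {0<..<1}" "s \<in> {0<..<1}" "r \<le> s" for r s
    using g_antimono that by (auto simp: monotone_on_def)
  show "0 \<le> g t"
  proof (rule ccontr)
    assume "\<not> 0 \<le> g t"
    have "emeasure lborel {t..<1} \<le> emeasure lborel {s\<in>{0<..<1}. g s \<le> g t}"
      using t antimonoD by (intro emeasure_mono \<open>{s\<in>{0<..<1}. g s \<le> g t} \<in> sets lborel\<close>) auto
    also have "\<dots> = emeasure lborel {s\<in>{0<..<1}. h s \<le> g t}" by (rule equimeasurable)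
    also have "{s\<in>{0<..<1}. h s \<le> g t} = {}" using value_bounds \<open>\<not> 0 \<le> g t\<close> by force
    finally show False using t by simp
  qed
  show "g t \<le> 1"
  proof (rule ccontr)
    assume "\<not> g t \<le> 1"
    then have "{s\<in>{0<..<1}. g s \<le> 1} \<subseteq> {t..<1}"
      using t antimonoD by (force simp: not_less[symmetric])
    then have "emeasure lborel {s\<in>{0<..<1}. g s \<le> 1} \<le> emeasure lborel {t..<1}"
      by (rule emeasure_mono) simp
    moreover have "{s\<in>{0<..<1}. h s \<le> 1} = {0<..<1}" using value_bounds by force
    ultimately have "ennreal 1 \<le> ennreal (1 - t)" using t equimeasurable[of 1] by simp
    then show False using t by (simp add: ennreal_le_iff)
  qed
qed

lemma equimeasurable_decreasing_unit_function: "decreasing_unit_function g"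
proof
  show "(\<lambda>t. if t \<in> {0<..<1} then g t else 0) \<in> borel_measurable borel"
    by (rule borel_measurable_antimono_on_unit_interval[OF g_antimono])
qed (use equimeasurable_value_bounds g_antimono in auto)

lemma superlevel_measure_equimeasurable: "superlevel_measure g = superlevel_measure h"
proof
  fix y
  interpret g: decreasing_unit_function g by (rule equimeasurable_decreasing_unit_function)
  have "measure lborel {t\<in>{0<..<1}. g t \<le> y} = measure lborel {t\<in>{0<..<1}. h t \<le> y}"
    unfolding measure_def using equimeasurable by simp
  then show "superlevel_measure g y = superlevel_measure h y"
    by (simp add: g.superlevel_measure_eq_1_minus superlevel_measure_eq_1_minus)
qed

end

lemma decreasing_unit_function_decr_rearr: "decreasing_unit_function (decr_rearr h)"
  and superlevel_measure_decr_rearr: "superlevel_measure (decr_rearr h) = superlevel_measure h"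
  using equimeasurable_decreasing_unit_function superlevel_measure_equimeasurable decr_rearr_spec
  by blast+

end

section \<open>Measurability of derivatives\<close>

definition difference_quotient :: "(real \<Rightarrow> real) \<Rightarrow> real \<Rightarrow> real \<Rightarrow> real" where
  "difference_quotient F t k = (F (t + k) - F t) / k"

text \<open>\<open>F\<close> is differentiable at \<open>t\<close> iff \<open>t \<in> (\<Inter>m. \<Union>n. difference_quotient_Cauchy F m n)\<close>, and for
  continuous \<open>F\<close> these sets are closed; this makes the set of differentiability points Borel.\<close>
definition difference_quotient_Cauchy :: "(real \<Rightarrow> real) \<Rightarrow> nat \<Rightarrow> nat \<Rightarrow> real set" where
  "difference_quotient_Cauchy F m n =
    {t. \<forall>a b. 0 < \<bar>a\<bar> \<and> \<bar>a\<bar> < 1 / (real n + 1) \<and> 0 < \<bar>b\<bar> \<and> \<bar>b\<bar> < 1 / (real n + 1) \<longrightarrow>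
        \<bar>difference_quotient F t a - difference_quotient F t b\<bar> \<le> 1 / (real m + 1)}"

lemma has_real_derivative_iff_difference_quotient:
  "(F has_real_derivative L) (at t) \<longleftrightarrow> (difference_quotient F t \<longlongrightarrow> L) (at 0)"
  unfolding DERIV_def difference_quotient_def[abs_def] ..

lemma difference_quotient_Cauchy_if_differentiable:
  assumes "F differentiable (at t)"
  shows "\<exists>n. t \<in> difference_quotient_Cauchy F m n"
proof -
  obtain L where "(difference_quotient F t \<longlongrightarrow> L) (at 0)"
    using assms by (auto simp: real_differentiable_def has_real_derivative_iff_difference_quotient)
  moreover have "0 < 1 / (2 * (real m + 1))" by simp
  ultimately have "eventually (\<lambda>k. dist (difference_quotient F t k) L < 1 / (2 * (real m + 1))) (at 0)"
    by (rule tendstoD)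
  then obtain d where d: "d > 0"
    "\<And>k. k \<noteq> 0 \<Longrightarrow> dist k 0 < d \<Longrightarrow> dist (difference_quotient F t k) L < 1 / (2 * (real m + 1))"
    unfolding eventually_at by auto
  obtain n :: nat where n: "inverse (real (Suc n)) < d" using reals_Archimedean[OF d(1)] by auto
  have "\<bar>difference_quotient F t a - difference_quotient F t b\<bar> \<le> 1 / (real m + 1)"
    if ab: "0 < \<bar>a\<bar>" "\<bar>a\<bar> < 1 / (real n + 1)" "0 < \<bar>b\<bar>" "\<bar>b\<bar> < 1 / (real n + 1)" for a b
  proof -
    have "1 / (real n + 1) = inverse (real (Suc n))" by (simp add: divide_inverse)
    then have "dist a 0 < d" "dist b 0 < d" using ab n by (auto simp: dist_real_def)
    then have "dist (difference_quotient F t a) L < 1 / (2 * (real m + 1))"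
      "dist (difference_quotient F t b) L < 1 / (2 * (real m + 1))"
      using ab d(2) by auto
    moreover have "1 / (2 * (real m + 1)) + 1 / (2 * (real m + 1)) = 1 / (real m + 1)"
      by (simp add: field_simps)
    ultimately show ?thesis unfolding dist_real_def by (smt (verit))
  qed
  then show ?thesis unfolding difference_quotient_Cauchy_def by blast
qed

lemma convergent_difference_quotient_if_Cauchy:
  assumes Cauchy: "\<And>m. \<exists>n. t \<in> difference_quotient_Cauchy F m n"
  shows "convergent (\<lambda>p. difference_quotient F t (1 / (real p + 2)))"
proof -
  have "Cauchy (\<lambda>p. difference_quotient F t (1 / (real p + 2)))"
  proof (rule metric_CauchyI)
    fix e :: real assume "e > 0"
    obtain m :: nat where m: "inverse (real (Suc m)) < e" using reals_Archimedean[OF \<open>e > 0\<close>] by auto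
    obtain N where "t \<in> difference_quotient_Cauchy F m N" using Cauchy by blast
    then have "\<bar>difference_quotient F t (1 / (real p + 2)) - difference_quotient F t (1 / (real q + 2))\<bar>
        \<le> 1 / (real m + 1)" if "N \<le> p" "N \<le> q" for p q
      using that by (auto simp: difference_quotient_Cauchy_def frac_less2)
    moreover have "1 / (real m + 1) < e" using m by (simp add: divide_inverse add.commute)
    ultimately show "\<exists>M. \<forall>p\<ge>M. \<forall>q\<ge>M.
        dist (difference_quotient F t (1 / (real p + 2))) (difference_quotient F t (1 / (real q + 2))) < e"
      by (force simp: dist_real_def)
  qed
  then show ?thesis by (simp add: Cauchy_convergent_iff)
qed

lemma differentiable_if_difference_quotient_Cauchy:
  assumes Cauchy: "\<And>m. \<exists>n. t \<in> difference_quotient_Cauchy F m n"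
  shows "F differentiable (at t)"
proof -
  define x where "x p = difference_quotient F t (1 / (real p + 2))" for p :: nat
  obtain L where xL: "x \<longlonglongrightarrow> L"
    using convergent_difference_quotient_if_Cauchy[OF Cauchy] unfolding x_def convergent_def by blast
  have "(difference_quotient F t \<longlongrightarrow> L) (at 0)"
  proof (rule tendstoI)
    fix e :: real assume "e > 0"
    obtain m :: nat where m: "inverse (real (Suc m)) < e" using reals_Archimedean[OF \<open>e > 0\<close>] by auto
    obtain N where N: "t \<in> difference_quotient_Cauchy F m N" using Cauchy by blast
    have "dist (difference_quotient F t k) L < e" if k: "k \<noteq> 0" "dist k 0 < 1 / (real N + 1)" for k
    proof -
      have "(\<lambda>p. \<bar>difference_quotient F t k - x p\<bar>) \<longlonglongrightarrow> \<bar>difference_quotient F t k - L\<bar>"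
        by (intro tendsto_intros xL)
      moreover have "eventually (\<lambda>p. \<bar>difference_quotient F t k - x p\<bar> \<le> 1 / (real m + 1)) sequentially"
        using eventually_ge_at_top[of N]
        by eventually_elim (use N k in \<open>auto simp: x_def difference_quotient_Cauchy_def frac_less2\<close>)
      ultimately have "\<bar>difference_quotient F t k - L\<bar> \<le> 1 / (real m + 1)"
        by (rule tendsto_upperbound) simp
      also have "\<dots> < e" using m by (simp add: divide_inverse add.commute)
      finally show ?thesis by (simp add: dist_real_def)
    qed
    then show "eventually (\<lambda>k. dist (difference_quotient F t k) L < e) (at 0)"
      unfolding eventually_at by (intro exI[of _ "1 / (real N + 1)"]) auto
  qed
  then show ?thesis
    by (auto simp: real_differentiable_def has_real_derivative_iff_difference_quotient)
qed

lemma closed_difference_quotient_Cauchy: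
  assumes F: "continuous_on UNIV F"
  shows "closed (difference_quotient_Cauchy F m n)"
proof -
  have "continuous_on UNIV (\<lambda>t. difference_quotient F t a)" for a
  proof -
    have "(\<lambda>t. difference_quotient F t a) = (\<lambda>t. (F (t + a) - F t) * (1 / a))"
      by (auto simp: difference_quotient_def)
    then show ?thesis by (simp only:) (intro continuous_intros continuous_on_compose2[OF F], auto)
  qed
  moreover have "difference_quotient_Cauchy F m n =
      (\<Inter>ab\<in>{ab. 0 < \<bar>fst ab\<bar> \<and> \<bar>fst ab\<bar> < 1 / (real n + 1) \<and> 0 < \<bar>snd ab\<bar> \<and> \<bar>snd ab\<bar> < 1 / (real n + 1)}.
        {t. \<bar>difference_quotient F t (fst ab) - difference_quotient F t (snd ab)\<bar> \<le> 1 / (real m + 1)})"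
    unfolding difference_quotient_Cauchy_def by auto
  ultimately show ?thesis
    by (simp only:) (intro closed_INT ballI closed_Collect_le continuous_intros)
qed

lemma filterlim_one_over_plus_2_at_0: "filterlim (\<lambda>i. 1 / (real i + 2)) (at (0::real)) sequentially"
proof -
  have "(\<lambda>i. 1 / (real i + 2)) \<longlonglongrightarrow> 0"
    using LIMSEQ_ignore_initial_segment[OF lim_const_over_n[of 1], of 2] by (simp add: add.commute)
  then show ?thesis unfolding filterlim_at by (auto intro!: always_eventually)
qed

lemma borel_measurable_deriv:
  fixes F :: "real \<Rightarrow> real"
  assumes F: "continuous_on UNIV F"
  shows "(\<lambda>t. if F differentiable (at t) then deriv F t else 0) \<in> borel_measurable borel"
proof -
  have [measurable]: "F \<in> borel_measurable borel" using F by (rule borel_measurable_continuous_onI)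
  have [measurable]: "difference_quotient_Cauchy F m n \<in> sets borel" for m n
    using closed_difference_quotient_Cauchy[OF F] by (rule borel_closed)
  define D where "D = (\<Inter>m. \<Union>n. difference_quotient_Cauchy F m n)"
  have [measurable]: "D \<in> sets borel" unfolding D_def by measurable
  have D_iff: "F differentiable (at t) \<longleftrightarrow> t \<in> D" for t
  proof
    assume "F differentiable (at t)"
    then show "t \<in> D" unfolding D_def using difference_quotient_Cauchy_if_differentiable by blast
  next
    assume "t \<in> D"
    then show "F differentiable (at t)"
      unfolding D_def by (intro differentiable_if_difference_quotient_Cauchy) blast
  qed
  define u where "u i t = (if t \<in> D then difference_quotient F t (1 / (real i + 2)) else 0)" for i t
  have "u i \<in> borel_measurable borel" for i
    unfolding u_def difference_quotient_def by measurable
  moreover have "(\<lambda>i. u i t) \<longlonglongrightarrow> (if F differentiable (at t) then deriv F t else 0)" for t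
  proof (cases "t \<in> D")
    case True
    then have "(difference_quotient F t \<longlongrightarrow> deriv F t) (at 0)"
      using D_iff DERIV_deriv_iff_real_differentiable has_real_derivative_iff_difference_quotient by blast
    then have "(\<lambda>i. difference_quotient F t (1 / (real i + 2))) \<longlonglongrightarrow> deriv F t"
      using filterlim_one_over_plus_2_at_0 by (rule filterlim_compose)
    then show ?thesis using True D_iff by (simp add: u_def)
  next
    case False
    then show ?thesis using D_iff by (simp add: u_def)
  qed
  ultimately show ?thesis
    using borel_measurable_LIMSEQ_real[of borel u "\<lambda>t. if F differentiable (at t) then deriv F t else 0"]
    by auto
qed

section \<open>Sections of copulas\<close>

lemma copula_section_increment:
  assumes C: "is_copula C" and u: "u \<in> {0..1}" and st: "0 \<le> s" "s \<le> t" "t \<le> 1"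
  shows "0 \<le> C u t - C u s \<and> C u t - C u s \<le> t - s"
proof -
  have rect: "C u2 v2 - C u2 v1 - C u1 v2 + C u1 v1 \<ge> 0"
    if "0 \<le> u1" "u1 \<le> u2" "u2 \<le> 1" "0 \<le> v1" "v1 \<le> v2" "v2 \<le> 1" for u1 u2 v1 v2
    using C that unfolding is_copula_def by blast
  have "C u t - C u s - C 0 t + C 0 s \<ge> 0" "C 1 t - C 1 s - C u t + C u s \<ge> 0"
    using rect[of 0 u s t] rect[of u 1 s t] u st by auto
  moreover have "C 0 t = 0" "C 0 s = 0" "C 1 t = t" "C 1 s = s"
    using C st unfolding is_copula_def by auto
  ultimately show ?thesis by linarith
qed

lemma differentiable_deriv_cong_open:
  fixes f g :: "real \<Rightarrow> real"
  assumes "open S" "t \<in> S" "\<And>x. x \<in> S \<Longrightarrow> f x = g x"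
  shows "f differentiable (at t) \<longleftrightarrow> g differentiable (at t)" "deriv f t = deriv g t"
proof -
  show "f differentiable (at t) \<longleftrightarrow> g differentiable (at t)"
    unfolding real_differentiable_def
    using has_field_derivative_transform_within_open[OF _ assms(1,2), of f _ g]
      has_field_derivative_transform_within_open[OF _ assms(1,2), of g _ f] assms(3)
    by metis
  have "eventually (\<lambda>x. f x = g x) (nhds t)"
    using assms by (auto simp: eventually_nhds)
  then show "deriv f t = deriv g t" by (rule deriv_cong_ev) simp
qed

lemma partial2_borel_measurable:
  assumes C: "is_copula C" and u: "u \<in> {0..1}"
  shows "(\<lambda>t. if t \<in> {0<..<1} then partial2 C u t else 0) \<in> borel_measurable borel"
proof -
  define F where "F x = C u (max 0 (min 1 x))" for x
  have "lipschitz_on 1 UNIV F"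
  proof (rule lipschitz_onI)
    fix x y :: real
    have "\<bar>F x - F y\<bar> \<le> \<bar>max 0 (min 1 x) - max 0 (min 1 y)\<bar>"
      using copula_section_increment[OF C u, of "max 0 (min 1 x)" "max 0 (min 1 y)"]
        copula_section_increment[OF C u, of "max 0 (min 1 y)" "max 0 (min 1 x)"]
      unfolding F_def by (cases "x \<le> y") (auto simp: max_def min_def)
    also have "\<dots> \<le> \<bar>x - y\<bar>" by (auto simp: max_def min_def)
    finally show "dist (F x) (F y) \<le> 1 * dist x y" by (simp add: dist_real_def)
  qed simp
  then have [measurable]: "(\<lambda>t. if F differentiable (at t) then deriv F t else 0) \<in> borel_measurable borel"
    by (intro borel_measurable_deriv lipschitz_on_continuous_on)
  have "partial2 C u t = (if F differentiable (at t) then deriv F t else 0)" if "t \<in> {0<..<1}" for t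
    using differentiable_deriv_cong_open[of "{0<..<1}" t "\<lambda>s. C u s" F] that
    by (simp add: partial2_def F_def)
  then have "(\<lambda>t. if t \<in> {0<..<1} then partial2 C u t else 0) =
      (\<lambda>t. if t \<in> {0<..<1} then (if F differentiable (at t) then deriv F t else 0) else 0)"
    by auto
  also have "\<dots> \<in> borel_measurable borel" by measurable
  finally show ?thesis .
qed

lemma partial2_bounds:
  assumes C: "is_copula C" and u: "u \<in> {0..1}" and t: "t \<in> {0<..<1}"
  shows "0 \<le> partial2 C u t \<and> partial2 C u t \<le> 1"
proof (cases "(\<lambda>s. C u s) differentiable (at t)")
  case True
  then have "((\<lambda>y. (C u y - C u t) / (y - t)) \<longlongrightarrow> deriv (\<lambda>s. C u s) t) (at t)"
    using DERIV_deriv_iff_real_differentiable has_field_derivative_iff by blast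
  moreover have "eventually (\<lambda>y. 0 \<le> (C u y - C u t) / (y - t) \<and> (C u y - C u t) / (y - t) \<le> 1) (at t)"
  proof -
    have "eventually (\<lambda>y. y \<in> {0<..<1} \<and> y \<noteq> t) (at t)"
      using t by (auto simp: eventually_at_filter eventually_nhds intro!: exI[of _ "{0<..<1}"])
    moreover have "0 \<le> (C u y - C u t) / (y - t) \<and> (C u y - C u t) / (y - t) \<le> 1"
      if "y \<in> {0<..<1}" "y \<noteq> t" for y
    proof (cases "t < y")
      case True
      then show ?thesis using copula_section_increment[OF C u, of t y] that t by (auto simp: divide_le_eq)
    next
      case False
      then have "(C u y - C u t) / (y - t) = (C u t - C u y) / (t - y)"
        by (metis minus_diff_eq minus_divide_divide)
      then show ?thesis
        using False copula_section_increment[OF C u, of y t] that t by (auto simp: divide_le_eq)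
    qed
    ultimately show ?thesis by (auto elim: eventually_mono)
  qed
  ultimately have "0 \<le> deriv (\<lambda>s. C u s) t \<and> deriv (\<lambda>s. C u s) t \<le> 1"
    by (auto intro: tendsto_lowerbound tendsto_upperbound elim: eventually_mono)
  then show ?thesis using True by (simp add: partial2_def)
qed (simp add: partial2_def)

lemma unit_interval_function_partial2:
  assumes "is_copula C" "u \<in> {0..1}"
  shows "unit_interval_function (partial2 C u)"
proof
  show "(\<lambda>t. if t \<in> {0<..<1} then partial2 C u t else 0) \<in> borel_measurable borel"
    using assms by (rule partial2_borel_measurable)
qed (use assms partial2_bounds in auto)

lemma partial2_eq_if_has_real_derivative:
  assumes "((\<lambda>s. K u s) has_real_derivative d) (at t)"
  shows "partial2 K u t = d"
  using assms DERIV_imp_deriv real_differentiable_def by (fastforce simp: partial2_def)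

lemma partial2_Pi_cop: "partial2 Pi_cop u t = u"
proof -
  have "((\<lambda>s. Pi_cop u s) has_real_derivative u) (at t)"
    unfolding Pi_cop_def by (auto intro!: derivative_eq_intros)
  then show ?thesis by (rule partial2_eq_if_has_real_derivative)
qed

lemma cop_T_eq_integral_min: "cop_T C u v = integral {0..1} (\<lambda>t. min (partial2 C u t) v)"
  by (simp add: cop_T_def cop_join_def partial2_Pi_cop)

lemma cop_join_Pi_cop_eq_integral_superlevel_measure:
  assumes "is_copula C" "u \<in> {0..1}" "v \<in> {0..1}"
  shows "cop_join C Pi_cop u v = integral {0..v} (superlevel_measure (partial2 C u))"
proof -
  interpret unit_interval_function "partial2 C u"
    using assms(1,2) by (rule unit_interval_function_partial2)
  show ?thesis
    using assms by (simp add: cop_join_def partial2_Pi_cop integral_min_eq_integral_superlevel_measure)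
qed

lemma has_real_derivative_if_eq_integral:
  fixes f K :: "real \<Rightarrow> real"
  assumes f: "f integrable_on {0..1}" and t: "t \<in> {0<..<1}" and cont: "isCont f t"
    and K: "\<And>s. s \<in> {0<..<1} \<Longrightarrow> K s = integral {0..s} f"
  shows "(K has_real_derivative f t) (at t)"
proof -
  have "((\<lambda>s. integral {0..s} f) has_vector_derivative f t) (at t within {0..1} - {})"
    by (rule integral_has_vector_derivative_continuous_at[OF f])
       (use t cont in \<open>auto intro: continuous_at_imp_continuous_within\<close>)
  moreover have "at t within {0..1} = at t"
    by (rule at_within_interior) (use t in simp)
  ultimately have "((\<lambda>s. integral {0..s} f) has_real_derivative f t) (at t)"
    by (simp add: has_real_derivative_iff_has_vector_derivative)
  then show ?thesis
    by (rule has_field_derivative_transform_within_open[of _ _ _ "{0<..<1}"]) (use t K in auto)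
qed

lemma cop_T_eq_integral_superlevel_measure_if_eq_integral:
  assumes "decreasing_unit_function f"
    and K: "\<And>s. s \<in> {0<..<1} \<Longrightarrow> K u s = integral {0..s} f" and v: "v \<in> {0..1}"
  shows "cop_T K u v = integral {0..v} (superlevel_measure f)"
proof -
  interpret decreasing_unit_function f by fact
  have "partial2 K u t = f t" if "t \<in> {0<..<1}" "isCont f t" for t
    using that K by (intro partial2_eq_if_has_real_derivative has_real_derivative_if_eq_integral integrable_on_unit_interval)
  moreover have "negligible ({0, 1} \<union> {t\<in>{0<..<1}. \<not> isCont f t})"
    using countable_discontinuities by (intro countable_imp_negligible) auto
  ultimately have "integral {0..1} (\<lambda>t. min (partial2 K u t) v) = integral {0..1} (\<lambda>t. min (f t) v)"
    by (intro integral_spike[where S = "{0, 1} \<union> {t\<in>{0<..<1}. \<not> isCont f t}"]) auto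
  then show ?thesis
    using v by (simp add: cop_T_eq_integral_min integral_min_eq_integral_superlevel_measure)
qed

theorem cop_T_cop_join_Pi_cop:
  assumes C: "is_copula C" and u: "u \<in> {0..1}" and v: "v \<in> {0..1}"
  shows "cop_T (cop_join C Pi_cop) u v = C_up C u v"
proof -
  interpret unit_interval_function "partial2 C u"
    using C u by (rule unit_interval_function_partial2)
  interpret rearr: decreasing_unit_function "decr_rearr (partial2 C u)"
    by (rule decreasing_unit_function_decr_rearr)
  have "cop_T (cop_join C Pi_cop) u v = integral {0..v} (superlevel_measure (superlevel_measure (partial2 C u)))"
    using C u v decreasing_unit_function_superlevel_measure
    by (intro cop_T_eq_integral_superlevel_measure_if_eq_integral)
      (auto simp: cop_join_Pi_cop_eq_integral_superlevel_measure)
  also have "\<dots> = integral {0..v} (superlevel_measure (superlevel_measure (decr_rearr (partial2 C u))))"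
    by (simp add: superlevel_measure_decr_rearr)
  also have "\<dots> = C_up C u v"
    using v by (simp add: rearr.integral_superlevel_measure_superlevel_measure C_up_def)
  finally show ?thesis .
qed

theorem cop_T_C_up:
  assumes C: "is_copula C" and u: "u \<in> {0..1}" and v: "v \<in> {0..1}"
  shows "cop_T (C_up C) u v = cop_join C Pi_cop u v"
proof -
  interpret unit_interval_function "partial2 C u"
    using C u by (rule unit_interval_function_partial2)
  have "cop_T (C_up C) u v = integral {0..v} (superlevel_measure (decr_rearr (partial2 C u)))"
    using v decreasing_unit_function_decr_rearr
    by (intro cop_T_eq_integral_superlevel_measure_if_eq_integral) (auto simp: C_up_def)
  also have "\<dots> = cop_join C Pi_cop u v"
    using C u v by (simp add: superlevel_measure_decr_rearr cop_join_Pi_cop_eq_integral_superlevel_measure)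
  finally show ?thesis .
qed

section \<open>Concave sections\<close>

definition chord_slope :: "(real \<Rightarrow> real) \<Rightarrow> real \<Rightarrow> real \<Rightarrow> real" where
  "chord_slope \<phi> a b = (\<phi> b - \<phi> a) / (b - a)"

definition right_deriv :: "(real \<Rightarrow> real) \<Rightarrow> real \<Rightarrow> real" where
  "right_deriv \<phi> t = Sup (chord_slope \<phi> t ` {t<..1})"

definition right_deriv_limit :: "(real \<Rightarrow> real) \<Rightarrow> real \<Rightarrow> real" where
  "right_deriv_limit \<phi> t = Sup (right_deriv \<phi> ` {t<..<1})"

locale concave_section =
  fixes \<phi> :: "real \<Rightarrow> real"
  assumes concave: "concave_on {0..1} \<phi>"
    and increment: "\<And>s t. 0 \<le> s \<Longrightarrow> s \<le> t \<Longrightarrow> t \<le> 1 \<Longrightarrow> 0 \<le> \<phi> t - \<phi> s \<and> \<phi> t - \<phi> s \<le> t - s"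
begin

lemma chord_slope_decreasing:
  assumes "0 \<le> a" "a < t" "t < b" "b \<le> 1"
  shows "chord_slope \<phi> a b \<le> chord_slope \<phi> a t \<and> chord_slope \<phi> t b \<le> chord_slope \<phi> a b"
proof -
  have neg: "((- \<phi> x) - (- \<phi> y)) / (x - y) = - chord_slope \<phi> x y" for x y
    unfolding chord_slope_def
    by (metis minus_diff_eq minus_divide_divide minus_divide_left diff_minus_eq_add uminus_add_conv_diff)
  have "convex_on {0..1} (\<lambda>x. - \<phi> x)" using concave by (simp add: concave_on_def)
  from convex_on_slope_le[OF this, of a b t] assms show ?thesis
    unfolding neg by auto
qed

lemma chord_slope_bounds:
  assumes "0 \<le> a" "a < b" "b \<le> 1"
  shows "0 \<le> chord_slope \<phi> a b \<and> chord_slope \<phi> a b \<le> 1"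
  using increment[of a b] assms by (auto simp: chord_slope_def divide_le_eq)

lemma chord_slope_le_right_deriv:
  "0 \<le> t \<Longrightarrow> t < b \<Longrightarrow> b \<le> 1 \<Longrightarrow> chord_slope \<phi> t b \<le> right_deriv \<phi> t"
  unfolding right_deriv_def using chord_slope_bounds by (intro cSup_upper bdd_aboveI[of _ 1]) auto

lemma right_deriv_least:
  "0 \<le> t \<Longrightarrow> t < 1 \<Longrightarrow> (\<And>b. t < b \<Longrightarrow> b \<le> 1 \<Longrightarrow> chord_slope \<phi> t b \<le> c) \<Longrightarrow> right_deriv \<phi> t \<le> c"
  unfolding right_deriv_def by (rule cSup_least) auto

lemma right_deriv_bounds: "0 \<le> t \<Longrightarrow> t < 1 \<Longrightarrow> 0 \<le> right_deriv \<phi> t \<and> right_deriv \<phi> t \<le> 1"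
  using chord_slope_le_right_deriv[of t 1] chord_slope_bounds[of t 1] right_deriv_least[of t 1]
    chord_slope_bounds[of t]
  by force

lemma right_deriv_antimono: "0 \<le> t \<Longrightarrow> t < t' \<Longrightarrow> t' < 1 \<Longrightarrow> right_deriv \<phi> t' \<le> right_deriv \<phi> t"
proof -
  assume t: "0 \<le> t" "t < t'" "t' < 1"
  have "right_deriv \<phi> t' \<le> chord_slope \<phi> t t'"
  proof (rule right_deriv_least)
    fix b assume "t' < b" "b \<le> 1"
    then show "chord_slope \<phi> t' b \<le> chord_slope \<phi> t t'"
      using chord_slope_decreasing[of t t' b] t by linarith
  qed (use t in auto)
  also have "\<dots> \<le> right_deriv \<phi> t" by (rule chord_slope_le_right_deriv) (use t in auto)
  finally show ?thesis .
qed

text \<open>Right derivatives on the left of \<open>t\<close> dominate the difference quotients at \<open>t\<close> from the left,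
  so continuity of \<open>right_deriv \<phi>\<close> at \<open>t\<close> squeezes both one-sided quotients.\<close>
lemma has_real_derivative_right_deriv:
  assumes t: "t \<in> {0<..<1}" and cont: "continuous (at t within {0<..<1}) (right_deriv \<phi>)"
  shows "(\<phi> has_real_derivative right_deriv \<phi> t) (at t)"
  unfolding has_field_derivative_iff
proof (rule tendstoI)
  fix e :: real assume e: "e > 0"
  obtain b0 where b0: "t < b0" "b0 \<le> 1" "right_deriv \<phi> t - e < chord_slope \<phi> t b0"
    using right_deriv_least[of t "right_deriv \<phi> t - e"] t e by force
  obtain d1 where d1: "d1 > 0"
    "\<And>y. y \<in> {0<..<1} \<Longrightarrow> dist y t < d1 \<Longrightarrow> dist (right_deriv \<phi> y) (right_deriv \<phi> t) < e"
    using cont e unfolding continuous_within_eps_delta by blast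
  define d where "d = min (b0 - t) (min d1 t)"
  have "dist ((\<phi> y - \<phi> t) / (y - t)) (right_deriv \<phi> t) < e" if y: "y \<noteq> t" "dist y t < d" for y
  proof (cases "t < y")
    case True
    then have "y < b0" using y by (auto simp: d_def dist_real_def)
    then have "chord_slope \<phi> t b0 \<le> chord_slope \<phi> t y" "chord_slope \<phi> t y \<le> right_deriv \<phi> t"
      using chord_slope_decreasing[of t y b0] chord_slope_le_right_deriv[of t y] True b0 t by auto
    then show ?thesis using b0 by (auto simp: dist_real_def chord_slope_def)
  next
    case False
    then have y0: "y < t" "y \<in> {0<..<1}" "dist y t < d1" using y t by (auto simp: d_def dist_real_def)
    have "(\<phi> y - \<phi> t) / (y - t) = chord_slope \<phi> y t"
      by (simp add: chord_slope_def) (metis minus_diff_eq minus_divide_divide)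
    moreover have "chord_slope \<phi> t b0 \<le> chord_slope \<phi> y t" "chord_slope \<phi> y t \<le> right_deriv \<phi> y"
      using chord_slope_decreasing[of y t b0] chord_slope_le_right_deriv[of y t] y0 t b0 by auto
    moreover have "right_deriv \<phi> y < right_deriv \<phi> t + e"
      using d1(2)[OF y0(2,3)] by (auto simp: dist_real_def)
    ultimately show ?thesis using b0 by (auto simp: dist_real_def)
  qed
  moreover have "d > 0" using b0 d1 t by (auto simp: d_def)
  ultimately show "eventually (\<lambda>y. dist ((\<phi> y - \<phi> t) / (y - t)) (right_deriv \<phi> t) < e) (at t)"
    unfolding eventually_at by blast
qed

lemma countable_not_differentiable: "countable {t\<in>{0<..<1}. \<not> \<phi> differentiable (at t)}"
proof -
  have "mono_on {0<..<1} (\<lambda>t. - right_deriv \<phi> t)"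
    by (rule mono_onI) (use right_deriv_antimono in \<open>fastforce simp: le_less\<close>)
  then have jumps: "countable {t\<in>{0<..<1}. \<not> continuous (at t within {0<..<1}) (\<lambda>t. - right_deriv \<phi> t)}"
    by (rule mono_on_ctble_discont)
  have "\<not> continuous (at t within {0<..<1}) (\<lambda>t. - right_deriv \<phi> t)"
    if t: "t \<in> {0<..<1}" and "\<not> \<phi> differentiable (at t)" for t
  proof
    assume "continuous (at t within {0<..<1}) (\<lambda>t. - right_deriv \<phi> t)"
    then have "continuous (at t within {0<..<1}) (right_deriv \<phi>)"
      using continuous_minus by fastforce
    with t have "(\<phi> has_real_derivative right_deriv \<phi> t) (at t)"
      by (rule has_real_derivative_right_deriv)
    then show False using \<open>\<not> \<phi> differentiable (at t)\<close> real_differentiable_def by blast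
  qed
  then have "{t\<in>{0<..<1}. \<not> \<phi> differentiable (at t)}
      \<subseteq> {t\<in>{0<..<1}. \<not> continuous (at t within {0<..<1}) (\<lambda>t. - right_deriv \<phi> t)}"
    by blast
  from this jumps show ?thesis by (rule countable_subset)
qed

lemma deriv_eq_right_deriv:
  assumes t: "t \<in> {0<..<1}" and "\<phi> differentiable (at t)"
  shows "deriv \<phi> t = right_deriv \<phi> t"
proof -
  have "((\<lambda>y. (\<phi> y - \<phi> t) / (y - t)) \<longlongrightarrow> deriv \<phi> t) (at t)"
    using assms(2) DERIV_deriv_iff_real_differentiable has_field_derivative_iff by blast
  then have lim: "((\<lambda>y. (\<phi> y - \<phi> t) / (y - t)) \<longlongrightarrow> deriv \<phi> t) (at_right t)"
    by (rule tendsto_mono[rotated]) (simp add: at_le)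
  have "deriv \<phi> t \<le> right_deriv \<phi> t"
  proof (rule tendsto_upperbound[OF lim])
    show "eventually (\<lambda>y. (\<phi> y - \<phi> t) / (y - t) \<le> right_deriv \<phi> t) (at_right t)"
      by (rule eventually_at_rightI[of t 1])
        (use t in \<open>auto intro!: chord_slope_le_right_deriv[unfolded chord_slope_def]\<close>)
  qed simp
  moreover have "right_deriv \<phi> t \<le> deriv \<phi> t"
  proof (rule right_deriv_least)
    fix b assume b: "t < b" "b \<le> 1"
    show "chord_slope \<phi> t b \<le> deriv \<phi> t"
    proof (rule tendsto_lowerbound[OF lim])
      show "eventually (\<lambda>y. chord_slope \<phi> t b \<le> (\<phi> y - \<phi> t) / (y - t)) (at_right t)"
      proof (rule eventually_at_rightI[of t b])
        fix y assume "y \<in> {t<..<b}"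
        then show "chord_slope \<phi> t b \<le> (\<phi> y - \<phi> t) / (y - t)"
          using chord_slope_decreasing[of t y b] t b by (auto simp: chord_slope_def)
      qed (use b in auto)
    qed simp
  qed (use t in auto)
  ultimately show ?thesis by simp
qed

lemma right_deriv_limit_le: "0 \<le> t \<Longrightarrow> t < 1 \<Longrightarrow> right_deriv_limit \<phi> t \<le> right_deriv \<phi> t"
  unfolding right_deriv_limit_def by (rule cSup_least) (auto intro: right_deriv_antimono less_imp_le)

lemma right_deriv_le_right_deriv_limit:
  "0 \<le> t' \<Longrightarrow> t' < t \<Longrightarrow> t < 1 \<Longrightarrow> right_deriv \<phi> t \<le> right_deriv_limit \<phi> t'"
  unfolding right_deriv_limit_def using right_deriv_bounds
  by (intro cSup_upper bdd_aboveI[of _ 1]) auto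

lemma at_within_differentiable_right_nontrivial:
  assumes t: "0 \<le> t" "t < 1"
  shows "at t within {s. t < s \<and> \<phi> differentiable (at s)} \<noteq> bot"
  unfolding not_trivial_limit_within_ball
proof (intro allI impI)
  fix e :: real assume "e > 0"
  have "uncountable ({t<..<min (t + e) 1} - {s\<in>{0<..<1}. \<not> \<phi> differentiable (at s)})"
    using t \<open>e > 0\<close>
    by (intro uncountable_minus_countable countable_not_differentiable) (auto simp: uncountable_open_interval)
  then obtain s where "s \<in> {t<..<min (t + e) 1} - {s\<in>{0<..<1}. \<not> \<phi> differentiable (at s)}"
    by (metis all_not_in_conv countable_empty)
  then have "s \<in> {s. t < s \<and> \<phi> differentiable (at s)} \<inter> ball t e - {t}"
    using t by (auto simp: dist_real_def)
  then show "{s. t < s \<and> \<phi> differentiable (at s)} \<inter> ball t e - {t} \<noteq> {}" by blast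
qed

lemma Lim_deriv_at_right:
  assumes t: "0 \<le> t" "t < 1"
  shows "Lim (at t within {s. t < s \<and> \<phi> differentiable (at s)})
             (\<lambda>s. if \<phi> differentiable (at s) then deriv \<phi> s else 0) = right_deriv_limit \<phi> t"
proof (rule tendsto_Lim[OF at_within_differentiable_right_nontrivial[OF t]])
  show "((\<lambda>s. if \<phi> differentiable (at s) then deriv \<phi> s else 0) \<longlongrightarrow> right_deriv_limit \<phi> t)
          (at t within {s. t < s \<and> \<phi> differentiable (at s)})"
  proof (rule tendstoI)
    fix e :: real assume e: "e > 0"
    obtain s0 where s0: "s0 \<in> {t<..<1}" "right_deriv_limit \<phi> t - e < right_deriv \<phi> s0"
      using cSup_least[of "right_deriv \<phi> ` {t<..<1}" "right_deriv_limit \<phi> t - e"] t e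
      unfolding right_deriv_limit_def by force
    have "dist (if \<phi> differentiable (at s) then deriv \<phi> s else 0) (right_deriv_limit \<phi> t) < e"
      if "t < s" "s < s0" "\<phi> differentiable (at s)" for s
    proof -
      have "deriv \<phi> s = right_deriv \<phi> s" using deriv_eq_right_deriv[of s] that s0 t by auto
      moreover have "right_deriv \<phi> s0 \<le> right_deriv \<phi> s" using right_deriv_antimono[of s s0] that s0 t by auto
      moreover have "right_deriv \<phi> s \<le> right_deriv_limit \<phi> t"
        using right_deriv_le_right_deriv_limit[of t s] that s0 t by auto
      ultimately show ?thesis using that s0 by (auto simp: dist_real_def)
    qed
    then show "eventually (\<lambda>s. dist (if \<phi> differentiable (at s) then deriv \<phi> s else 0) (right_deriv_limit \<phi> t) < e)
          (at t within {s. t < s \<and> \<phi> differentiable (at s)})"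
      unfolding eventually_at using s0 by (intro exI[of _ "s0 - t"]) (auto simp: dist_real_def)
  qed
qed

end

lemma bdd_below_gen_inv_set: "bdd_below {t\<in>{0..1}. f t \<le> w}"
  by (rule bdd_belowI[of _ 0]) auto

lemma gen_inv_bounds: "0 \<le> gen_inv f w \<and> gen_inv f w \<le> 1"
proof (cases "{t\<in>{0..1}. f t \<le> w} = {}")
  case False
  then obtain x where x: "x \<in> {t\<in>{0..1}. f t \<le> w}" by blast
  then have "Inf {t\<in>{0..1}. f t \<le> w} \<le> x"
    using bdd_below_gen_inv_set by (rule cInf_lower)
  moreover have "0 \<le> Inf {t\<in>{0..1}. f t \<le> w}"
    using False by (rule cInf_greatest) simp
  ultimately show ?thesis using x False by (simp add: gen_inv_def)
qed (simp add: gen_inv_def)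

lemma gen_inv_le:
  assumes "t \<in> {0..1}" "f t \<le> w"
  shows "gen_inv f w \<le> t"
proof -
  from assms have t: "t \<in> {t\<in>{0..1}. f t \<le> w}" by simp
  then have "{t\<in>{0..1}. f t \<le> w} \<noteq> {}" by blast
  show ?thesis
    unfolding gen_inv_def if_not_P[OF \<open>{t\<in>{0..1}. f t \<le> w} \<noteq> {}\<close>]
    using t bdd_below_gen_inv_set by (rule cInf_lower)
qed

lemma gen_inv_less_obtain:
  assumes less: "gen_inv f w < t" and "t \<le> 1"
  obtains t' where "t' \<in> {0..1}" "t' < t" "f t' \<le> w"
proof -
  have ne: "{t\<in>{0..1}. f t \<le> w} \<noteq> {}"
  proof
    assume "{t\<in>{0..1}. f t \<le> w} = {}"
    then have "gen_inv f w = 1" unfolding gen_inv_def by (rule if_P)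
    with assms show False by simp
  qed
  have "Inf {t\<in>{0..1}. f t \<le> w} < t"
    using less unfolding gen_inv_def if_not_P[OF ne] .
  then obtain t' where "t' \<in> {t\<in>{0..1}. f t \<le> w}" "t' < t"
    using cInf_lessD[OF ne] by blast
  then show ?thesis by (intro that) auto
qed

text \<open>\<open>\<phi>'\<close> is \<open>\<partial>\<^sub>2 D(u,\<cdot>)\<close> and the \<open>Lim\<close> is \<open>\<partial>\<^sub>2\<^sup>+ D(u,\<cdot>)\<close>, for \<open>\<phi> = D(u,\<cdot>)\<close>.\<close>
lemma (in concave_section) superlevel_measure_deriv_eq_gen_inv:
  defines "\<phi>' \<equiv> \<lambda>t. if \<phi> differentiable (at t) then deriv \<phi> t else 0"
  shows "superlevel_measure \<phi>' w = gen_inv (\<lambda>t. Lim (at t within {s. t < s \<and> \<phi> differentiable (at s)}) \<phi>') w"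
proof -
  define f where "f t = Lim (at t within {s. t < s \<and> \<phi> differentiable (at s)}) \<phi>'" for t
  have f_eq: "f t = right_deriv_limit \<phi> t" if "0 \<le> t" "t < 1" for t
    using Lim_deriv_at_right[OF that] by (simp add: f_def \<phi>'_def)
  have \<phi>'_eq: "\<phi>' t = right_deriv \<phi> t" if "t \<in> {0<..<1}" "\<phi> differentiable (at t)" for t
    using deriv_eq_right_deriv[OF that] that by (simp add: \<phi>'_def)
  have "t \<in> {t\<in>{0<..<1}. w < \<phi>' t} \<longleftrightarrow> t < gen_inv f w"
    if t: "t \<in> {0<..<1}" "\<phi> differentiable (at t)" "t \<noteq> gen_inv f w" for t
  proof (cases "t < gen_inv f w")
    case True
    then have "w < f t" using gen_inv_le[of t f w] t by fastforce
    also have "f t = right_deriv_limit \<phi> t" using f_eq t by auto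
    also have "\<dots> \<le> right_deriv \<phi> t" using right_deriv_limit_le t by auto
    also have "\<dots> = \<phi>' t" using \<phi>'_eq t by auto
    finally show ?thesis using True t by auto
  next
    case False
    then have "gen_inv f w < t" "t \<le> 1" using t by auto
    then obtain t' where t': "t' \<in> {0..1}" "t' < t" "f t' \<le> w"
      by (rule gen_inv_less_obtain)
    have "\<phi>' t = right_deriv \<phi> t" using \<phi>'_eq t by auto
    also have "\<dots> \<le> right_deriv_limit \<phi> t'" using right_deriv_le_right_deriv_limit t t' by auto
    also have "\<dots> = f t'" using f_eq t t' by auto
    finally show ?thesis using t' False by auto
  qed
  then have "measure lborel {t\<in>{0<..<1}. w < \<phi>' t} = gen_inv f w"
    using gen_inv_bounds[of f w]
    by (intro measure_eq_if_ae_eq_initial_interval[OF _ countable_not_differentiable]) auto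
  then show ?thesis by (simp add: superlevel_measure_def f_def[abs_def])
qed

lemma concave_section_SI_copula:
  assumes D: "is_SI_copula D" and u: "u \<in> {0..1}"
  shows "concave_section (\<lambda>t. D u t)"
proof
  show "concave_on {0..1} (\<lambda>t. D u t)" using D u by (auto simp: is_SI_copula_def)
  fix s t :: real assume "0 \<le> s" "s \<le> t" "t \<le> 1"
  then show "0 \<le> D u t - D u s \<and> D u t - D u s \<le> t - s"
    using copula_section_increment[of D u s t] D u by (auto simp: is_SI_copula_def)
qed

theorem cop_T_eq_cop_S:
  assumes D: "is_SI_copula D" and u: "u \<in> {0..1}" and v: "v \<in> {0..1}"
  shows "cop_T D u v = cop_S D u v"
proof -
  interpret concave_section "\<lambda>t. D u t"
    using D u by (rule concave_section_SI_copula)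
  have "cop_T D u v = integral {0..v} (superlevel_measure (partial2 D u))"
    using D u v by (simp add: cop_T_def is_SI_copula_def cop_join_Pi_cop_eq_integral_superlevel_measure)
  also have "superlevel_measure (partial2 D u) = gen_inv (partial2_plus D u)"
    using superlevel_measure_deriv_eq_gen_inv
    by (simp add: fun_eq_iff partial2_plus_def[abs_def] partial2_def[abs_def])
  finally show ?thesis by (simp add: cop_S_def)
qed

theorem mainTheorem10:
  shows "(\<forall>D. is_SI_copula D \<longrightarrow>
            (\<forall>u\<in>{0..1}. \<forall>v\<in>{0..1}. cop_T D u v = cop_S D u v)) \<and>
         (\<forall>C. is_copula C \<longrightarrow>
            (\<forall>u\<in>{0..1}. \<forall>v\<in>{0..1}.
               cop_T (cop_join C Pi_cop) u v = C_up C u v \<and>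
               cop_T (C_up C) u v = cop_join C Pi_cop u v))"
  using cop_T_eq_cop_S cop_T_cop_join_Pi_cop cop_T_C_up by blast

end
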